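(* Let $\rho$ be an $N\times N$ density matrix with eigenvalue vector $\lambda$ (nonnegative entries summing to one). Let $\{|i\rangle\}_{i=1}^N$ and $\{|a_i\rangle\}_{i=1}^N$ be orthonormal bases of $\mathbb{C}^N$, and let $p_i=\langle i|\rho|i\rangle$, $q_i=\langle a_i|\rho|a_i\rangle$. Let $1\le m,n\le N$ and let $A$ be the $n\times m$ matrix with entries $A_{ij}=\langle a_i|j\rangle$ ($1\le i\le n$, $1\le j\le m$). Define $\mu\in\mathbb{R}^{m+n}$ by $\mu=(1,1,\dots,1)+\big(\sigma(A)\oplus(-\sigma(A))\big)$, where $\sigma(A)$ is the vector of singular values of $A$, $\oplus$ denotes concatenation, and $\sigma(A)\oplus(-\sigma(A))$ is extended by zeros to length $m+n$. Then $$p_1+\dots+p_m+q_1+\dots+q_n\le\lambda^{\downarrow}\cdot\mu^{\downarrow},$$ where $x^\downarrow$ denotes the nonincreasing rearrangement of $x$, $\cdot$ is the standard scalar product, and the shorter of the two vectors is padded with zeros. *)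

theory Defs
  imports "Jordan_Normal_Form.Jordan_Normal_Form"
begin

definition braket :: "complex vec \<Rightarrow> complex vec \<Rightarrow> complex" where
  "braket a b = (\<Sum>k<dim_vec a. cnj (a $ k) * b $ k)"

definition ctrans :: "complex mat \<Rightarrow> complex mat" where
  "ctrans A = mat (dim_col A) (dim_row A) (\<lambda>(i,j). cnj (A $$ (j,i)))"

definition density_mat :: "nat \<Rightarrow> complex mat \<Rightarrow> bool" where
  "density_mat N \<rho> \<longleftrightarrow> \<rho> \<in> carrier_mat N N
     \<and> (\<forall>i<N. \<forall>j<N. \<rho> $$ (i,j) = cnj (\<rho> $$ (j,i)))
     \<and> (\<forall>v \<in> carrier_vec N. Im (braket v (\<rho> *\<^sub>v v)) = 0 \<and> Re (braket v (\<rho> *\<^sub>v v)) \<ge> 0)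
     \<and> (\<Sum>i<N. \<rho> $$ (i,i)) = 1"

definition eigenvalue_vector :: "complex mat \<Rightarrow> real list \<Rightarrow> bool" where
  "eigenvalue_vector M lam \<longleftrightarrow>
     char_poly M = (\<Prod>x\<leftarrow>lam. [:- complex_of_real x, 1:])"

(* orthonormal basis of C^N given as e 0, ..., e (N-1) *)
definition orthonormal_basis :: "nat \<Rightarrow> (nat \<Rightarrow> complex vec) \<Rightarrow> bool" where
  "orthonormal_basis N e \<longleftrightarrow> (\<forall>i<N. e i \<in> carrier_vec N)
     \<and> (\<forall>i<N. \<forall>j<N. braket (e i) (e j) = (if i = j then 1 else 0))"

(* singular values of an n x m matrix A: the min(n,m) nonnegative numbers s_k
   (in nonincreasing order) whose squares, together with m - min(n,m) zeros,
   are the eigenvalues (with multiplicity) of A^* A *)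
definition singular_values :: "complex mat \<Rightarrow> real list" where
  "singular_values A = (SOME s. length s = min (dim_row A) (dim_col A)
      \<and> sorted (rev s) \<and> (\<forall>x\<in>set s. x \<ge> 0)
      \<and> char_poly (ctrans A * A) =
          (\<Prod>x\<leftarrow>s. [:- complex_of_real (x^2), 1:]) * [:0, 1:] ^ (dim_col A - length s))"

definition sort_desc :: "real list \<Rightarrow> real list" where
  "sort_desc xs = rev (sort xs)"

definition pad :: "nat \<Rightarrow> real list \<Rightarrow> real list" where
  "pad k xs = xs @ replicate (k - length xs) 0"

definition dotp :: "real list \<Rightarrow> real list \<Rightarrow> real" where
  "dotp xs ys = (let k = max (length xs) (length ys) in
      sum_list (map2 (*) (pad k xs) (pad k ys)))"

end

theory Submission
  imports Defs
begin

text \<open>Diagonalise \<rho> = U diag(\<lambda>) U^* and put |1\<rangle>, ..., |m\<rangle>, |a_1\<rangle>, ..., |a_n\<rangle>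
  as the columns of an N \<times> (m + n) matrix Z. The left-hand side is tr(Z^* \<rho> Z). The Gram
  matrix Z^* Z is the block matrix [[1, A^*], [A, 1]], whose eigenvalues are exactly \<mu>: its
  characteristic polynomial is that of A^* A evaluated at (x - 1)^2, up to powers of x - 1.
  Diagonalising Z^* Z = V diag(g) V^* and setting P = U^* Z V, the trace becomes
  \<Sum>_kl \<lambda>_k g_l c_kl with c_kl = |P_kl|^2 / g_l. The matrix c is doubly substochastic
  (columns by construction, rows by Bessel's inequality), and for such matrices and nonnegative
  vectors the bilinear form is at most the scalar product of the decreasing rearrangements.\<close>

section \<open>Conjugate transpose and the inner product\<close>

definition unitary_mat :: "nat \<Rightarrow> complex mat \<Rightarrow> bool" where
  "unitary_mat n U \<longleftrightarrow> U \<in> carrier_mat n n \<and> ctrans U * U = 1\<^sub>m n"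

lemma ctrans_carrier [simp]: "A \<in> carrier_mat r c \<Longrightarrow> ctrans A \<in> carrier_mat c r"
  by (auto simp: ctrans_def)

lemma ctrans_dims [simp]: "dim_row (ctrans A) = dim_col A" "dim_col (ctrans A) = dim_row A"
  by (auto simp: ctrans_def)

lemma ctrans_index [simp]:
  "i < dim_col A \<Longrightarrow> j < dim_row A \<Longrightarrow> ctrans A $$ (i,j) = cnj (A $$ (j,i))"
  by (auto simp: ctrans_def)

lemma ctrans_ctrans [simp]: "ctrans (ctrans A) = A"
  by (rule eq_matI) auto

lemma ctrans_one_mat [simp]: "ctrans (1\<^sub>m n) = 1\<^sub>m n"
  by (rule eq_matI) auto

lemma ctrans_zero_mat [simp]: "ctrans (0\<^sub>m r c) = 0\<^sub>m c r"
  by (rule eq_matI) auto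

lemma ctrans_mult: "dim_col A = dim_row B \<Longrightarrow> ctrans (A * B) = ctrans B * ctrans A"
  by (intro eq_matI) (auto simp: scalar_prod_def ac_simps)

lemma assoc_mult_mat_dims:
  "dim_col A = dim_row B \<Longrightarrow> dim_col B = dim_row C \<Longrightarrow> A * B * C = A * (B * C)"
  by (rule assoc_mult_mat[of A "dim_row A" "dim_col A" B "dim_col B" C "dim_col C"]) auto

lemma self_adjoint_iff:
  "H \<in> carrier_mat n n \<Longrightarrow> ctrans H = H \<longleftrightarrow> (\<forall>i<n. \<forall>j<n. H $$ (i,j) = cnj (H $$ (j,i)))"
proof
  assume H: "H \<in> carrier_mat n n" and sa: "ctrans H = H"
  show "\<forall>i<n. \<forall>j<n. H $$ (i,j) = cnj (H $$ (j,i))"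
  proof (intro allI impI)
    fix i j assume "i < n" "j < n"
    hence "ctrans H $$ (i,j) = cnj (H $$ (j,i))" using H by simp
    thus "H $$ (i,j) = cnj (H $$ (j,i))" unfolding sa .
  qed
next
  assume H: "H \<in> carrier_mat n n" and h: "\<forall>i<n. \<forall>j<n. H $$ (i,j) = cnj (H $$ (j,i))"
  show "ctrans H = H"
  proof (rule eq_matI)
    fix i j assume "i < dim_row H" "j < dim_col H"
    thus "ctrans H $$ (i,j) = H $$ (i,j)" using H by (simp add: h[rule_format, of i j, symmetric])
  qed (use H in auto)
qed

lemma braket_mult_vec:
  assumes M: "M \<in> carrier_mat r c" and x: "x \<in> carrier_vec r" and y: "y \<in> carrier_vec c"
  shows "braket x (M *\<^sub>v y) = braket (ctrans M *\<^sub>v x) y"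
proof -
  have "braket x (M *\<^sub>v y) = (\<Sum>i<r. cnj (x $ i) * (\<Sum>j<c. M $$ (i,j) * y $ j))"
    using M x y by (simp add: braket_def scalar_prod_def atLeast0LessThan)
  also have "\<dots> = (\<Sum>i<r. \<Sum>j<c. cnj (x $ i) * M $$ (i,j) * y $ j)"
    by (simp add: sum_distrib_left ac_simps)
  also have "\<dots> = (\<Sum>j<c. \<Sum>i<r. cnj (x $ i) * M $$ (i,j) * y $ j)"
    by (rule sum.swap)
  also have "\<dots> = braket (ctrans M *\<^sub>v x) y"
    using M x y
    by (simp add: braket_def scalar_prod_def atLeast0LessThan sum_distrib_right sum_distrib_left ac_simps)
  finally show ?thesis .
qed

lemma braket_cnj: "dim_vec a = dim_vec b \<Longrightarrow> braket b a = cnj (braket a b)"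
  unfolding braket_def by (simp add: ac_simps)

lemma braket_self: "braket a a = of_real (\<Sum>k<dim_vec a. (cmod (a $ k))\<^sup>2)"
  unfolding braket_def of_real_sum by (intro sum.cong refl) (metis complex_norm_square mult.commute)

lemma braket_self_nonneg: "Re (braket a a) \<ge> 0"
  unfolding braket_self by (auto intro: sum_nonneg)

lemma braket_self_eq_0: assumes "braket a a = 0" shows "a = 0\<^sub>v (dim_vec a)"
proof -
  have "(\<Sum>k<dim_vec a. (cmod (a $ k))\<^sup>2) = 0"
    using assms unfolding braket_self of_real_eq_0_iff .
  hence "\<forall>k\<in>{..<dim_vec a}. (cmod (a $ k))\<^sup>2 = 0"
    by (subst sum_nonneg_eq_0_iff[symmetric]) auto
  thus ?thesis by (intro eq_vecI) auto
qed

lemma braket_smult_right: "dim_vec b = dim_vec a \<Longrightarrow> braket a (k \<cdot>\<^sub>v b) = k * braket a b"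
  unfolding braket_def by (simp add: sum_distrib_left ac_simps)

lemma braket_smult_left: "braket (k \<cdot>\<^sub>v a) b = cnj k * braket a b"
  unfolding braket_def by (simp add: sum_distrib_left ac_simps)

lemma unitary_matD:
  assumes "unitary_mat n U"
  shows "U \<in> carrier_mat n n" "ctrans U * U = 1\<^sub>m n" "U * ctrans U = 1\<^sub>m n"
  using assms mat_mult_left_right_inverse[of "ctrans U" n U] unfolding unitary_mat_def by auto

lemma unitary_mat_mult:
  assumes "unitary_mat n U" "unitary_mat n V" shows "unitary_mat n (U * V)"
proof -
  have U: "U \<in> carrier_mat n n" "ctrans U * U = 1\<^sub>m n" and V: "V \<in> carrier_mat n n" "ctrans V * V = 1\<^sub>m n"
    using assms unitary_matD by auto
  have "ctrans U * (U * V) = V"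
    using U V by (metis assoc_mult_mat ctrans_carrier left_mult_one_mat)
  hence "ctrans (U * V) * (U * V) = 1\<^sub>m n"
    using U V by (simp add: ctrans_mult assoc_mult_mat_dims)
  thus ?thesis using U V unfolding unitary_mat_def by auto
qed

lemma gram_mat_index:
  "A \<in> carrier_mat r c \<Longrightarrow> i < c \<Longrightarrow> j < c \<Longrightarrow> (ctrans A * A) $$ (i,j) = braket (col A i) (col A j)"
  by (simp add: scalar_prod_def braket_def atLeast0LessThan)

lemma diag_mult_ctrans:
  assumes "A \<in> carrier_mat r c" "k < r"
  shows "(A * ctrans A) $$ (k,k) = of_real (\<Sum>j<c. (cmod (A $$ (k,j)))\<^sup>2)"
  using assms unfolding of_real_sum
  by (simp add: scalar_prod_def atLeast0LessThan, intro sum.cong refl)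
    (metis complex_norm_square of_real_power)

lemma diag_ctrans_mult:
  assumes "A \<in> carrier_mat r c" "l < c"
  shows "(ctrans A * A) $$ (l,l) = of_real (\<Sum>k<r. (cmod (A $$ (k,l)))\<^sup>2)"
  using assms unfolding of_real_sum
  by (simp add: scalar_prod_def atLeast0LessThan, intro sum.cong refl)
    (metis complex_norm_square mult.commute of_real_power)

section \<open>Orthonormal lists and unitary completion\<close>

definition orthonormal_list :: "nat \<Rightarrow> complex vec list \<Rightarrow> bool" where
  "orthonormal_list n ws \<longleftrightarrow> set ws \<subseteq> carrier_vec n \<and>
     (\<forall>i<length ws. \<forall>j<length ws. braket (ws!i) (ws!j) = (if i = j then 1 else 0))"

text \<open>The conjugates of the given vectors, padded by a zero row, form a singular matrix; a
  nonzero vector of its kernel is orthogonal to all of them.\<close>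
lemma exists_orthogonal_vec:
  assumes ws: "set ws \<subseteq> carrier_vec n" and len: "length ws < n"
  shows "\<exists>v. v \<in> carrier_vec n \<and> v \<noteq> 0\<^sub>v n \<and> (\<forall>w\<in>set ws. braket w v = 0)"
proof -
  define c where "c = (\<lambda>i. if i < length ws then conjugate (ws!i) else 0\<^sub>v n)"
  define R where "R = mat\<^sub>r n n (\<lambda>i. if i = n - 1 then 0\<^sub>v n else c i)"
  have c: "c \<in> {0..<n} \<rightarrow> carrier_vec n"
    using ws by (auto simp: c_def subset_iff)
  have "det R = 0" unfolding R_def by (rule det_row_0[OF _ c]) (use len in auto)
  moreover have R: "R \<in> carrier_mat n n" unfolding R_def by auto
  ultimately obtain v where v: "v \<in> carrier_vec n" "v \<noteq> 0\<^sub>v n" "R *\<^sub>v v = 0\<^sub>v n"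
    using det_0_iff_vec_prod_zero[OF R] by auto
  have "braket w v = 0" if w: "w \<in> set ws" for w
  proof -
    from w obtain i where i: "i < length ws" and wi: "w = ws ! i" by (auto simp: in_set_conv_nth)
    have wc: "w \<in> carrier_vec n" using w ws by auto
    have "row R i = conjugate w"
      using i len wc wi unfolding R_def c_def by (subst row_mat_of_row_fun) auto
    moreover have "(R *\<^sub>v v) $ i = 0" using v(3) i len by simp
    hence "row R i \<bullet> v = 0" using R i len by simp
    ultimately show ?thesis using v(1) wc unfolding braket_def scalar_prod_def
      by (auto simp: atLeast0LessThan)
  qed
  thus ?thesis using v by auto
qed

lemma exists_normalized_multiple:
  assumes "v \<noteq> 0\<^sub>v (dim_vec v)"
  shows "\<exists>c. braket (c \<cdot>\<^sub>v v) (c \<cdot>\<^sub>v v) = 1"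
proof -
  obtain r where r: "braket v v = of_real r" using braket_self by blast
  have "r > 0" using braket_self_nonneg[of v] braket_self_eq_0[of v] r assms
    by (metis Re_complex_of_real less_eq_real_def of_real_0)
  hence "cnj (of_real (1 / sqrt r)) * of_real (1 / sqrt r) * braket v v = 1"
    unfolding r by (simp add: field_simps flip: of_real_mult)
  thus ?thesis by (metis braket_smult_left braket_smult_right mult.assoc)
qed

lemma orthonormal_list_snoc:
  assumes o: "orthonormal_list n ws" and len: "length ws < n"
  shows "\<exists>u. orthonormal_list n (ws @ [u])"
proof -
  have ws: "set ws \<subseteq> carrier_vec n" using o unfolding orthonormal_list_def by auto
  obtain v where v: "v \<in> carrier_vec n" "v \<noteq> 0\<^sub>v n" and orth: "\<forall>w\<in>set ws. braket w v = 0"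
    using exists_orthogonal_vec[OF ws len] by auto
  obtain c where c: "braket (c \<cdot>\<^sub>v v) (c \<cdot>\<^sub>v v) = 1"
    using exists_normalized_multiple[of v] v by auto
  define u where "u = c \<cdot>\<^sub>v v"
  have u: "u \<in> carrier_vec n" unfolding u_def using v by auto
  have orth_u: "braket w u = 0" "braket u w = 0" if "w \<in> set ws" for w
    using orth that ws v braket_cnj[of w u] u unfolding u_def by (auto simp: braket_smult_right)
  have "braket ((ws @ [u]) ! i) ((ws @ [u]) ! j) = (if i = j then 1 else 0)"
    if "i < Suc (length ws)" "j < Suc (length ws)" for i j
    using that o orth_u c unfolding orthonormal_list_def u_def
    by (cases "i < length ws"; cases "j < length ws") (auto simp: nth_append)
  thus ?thesis using ws u unfolding orthonormal_list_def by (intro exI[of _ u]) auto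
qed

lemma orthonormal_list_extend:
  assumes "orthonormal_list n ws" "length ws \<le> n"
  shows "\<exists>ws'. orthonormal_list n (ws @ ws') \<and> length (ws @ ws') = n"
  using assms
proof (induction "n - length ws" arbitrary: ws)
  case 0 thus ?case by (intro exI[of _ "[]"]) auto
next
  case (Suc k)
  then obtain u where u: "orthonormal_list n (ws @ [u])"
    using orthonormal_list_snoc by (metis diff_is_0_eq nat.distinct(1) not_less)
  obtain ws' where "orthonormal_list n ((ws @ [u]) @ ws')" "length ((ws @ [u]) @ ws') = n"
    using Suc(1)[of "ws @ [u]"] u Suc(2) by force
  thus ?case by (intro exI[of _ "u # ws'"]) auto
qed

lemma unitary_mat_of_cols:
  assumes "orthonormal_list n ws" "length ws = n"
  shows "unitary_mat n (mat_of_cols n ws)"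
proof -
  have C: "mat_of_cols n ws \<in> carrier_mat n n" using assms by auto
  have "(ctrans (mat_of_cols n ws) * mat_of_cols n ws) $$ (i,j) = 1\<^sub>m n $$ (i,j)"
    if "i < n" "j < n" for i j
    using gram_mat_index[OF C that] assms that unfolding orthonormal_list_def
    by (auto simp: col_mat_of_cols subset_iff)
  thus ?thesis using C unfolding unitary_mat_def by (auto intro!: eq_matI)
qed

lemma unitary_mat_with_first_col:
  assumes v: "v \<in> carrier_vec n" "braket v v = 1"
  shows "\<exists>W. unitary_mat n W \<and> col W 0 = v"
proof -
  have n: "n > 0" using v by (cases n) (auto simp: braket_def)
  have "orthonormal_list n [v]" using v unfolding orthonormal_list_def by auto
  then obtain ws' where "orthonormal_list n ([v] @ ws')" "length ([v] @ ws') = n"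
    using orthonormal_list_extend[of n "[v]"] n by auto
  thus ?thesis using unitary_mat_of_cols n v
    by (intro exI[of _ "mat_of_cols n (v # ws')"]) (auto simp: col_mat_of_cols)
qed


section \<open>The spectral theorem for self-adjoint matrices\<close>

definition real_diag_mat :: "nat \<Rightarrow> (nat \<Rightarrow> real) \<Rightarrow> complex mat" where
  "real_diag_mat n d = mat n n (\<lambda>(i,j). if i = j then complex_of_real (d i) else 0)"

lemma real_diag_mat_carrier [simp]: "real_diag_mat n d \<in> carrier_mat n n"
  by (simp add: real_diag_mat_def)

lemma real_diag_mat_dims [simp]: "dim_row (real_diag_mat n d) = n" "dim_col (real_diag_mat n d) = n"
  by (auto simp: real_diag_mat_def)

lemma real_diag_mat_index [simp]:
  "i < n \<Longrightarrow> j < n \<Longrightarrow> real_diag_mat n d $$ (i,j) = (if i = j then complex_of_real (d i) else 0)"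
  by (simp add: real_diag_mat_def)

lemma ctrans_real_diag_mat [simp]: "ctrans (real_diag_mat n d) = real_diag_mat n d"
  by (rule eq_matI) auto

lemma mult_real_diag_mat_index:
  assumes "A \<in> carrier_mat r n" "k < r" "l < n"
  shows "(A * real_diag_mat n d) $$ (k,l) = A $$ (k,l) * complex_of_real (d l)"
proof -
  have "(A * real_diag_mat n d) $$ (k,l) = (\<Sum>j<n. A $$ (k,j) * real_diag_mat n d $$ (j,l))"
    using assms by (simp add: scalar_prod_def atLeast0LessThan)
  also have "\<dots> = (\<Sum>j<n. if j = l then A $$ (k,j) * complex_of_real (d l) else 0)"
    using assms by (intro sum.cong) auto
  finally show ?thesis using assms by (simp add: sum.delta)
qed

lemma real_diag_mat_mult: "real_diag_mat n a * real_diag_mat n b = real_diag_mat n (\<lambda>i. a i * b i)"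
proof (rule eq_matI)
  fix i j assume "i < dim_row (real_diag_mat n (\<lambda>i. a i * b i))" "j < dim_col (real_diag_mat n (\<lambda>i. a i * b i))"
  thus "(real_diag_mat n a * real_diag_mat n b) $$ (i,j) = real_diag_mat n (\<lambda>i. a i * b i) $$ (i,j)"
    using mult_real_diag_mat_index[of "real_diag_mat n a" n n i j b] by simp
qed auto

lemma braket_real_diag_mat:
  assumes y: "y \<in> carrier_vec n"
  shows "braket y (real_diag_mat n d *\<^sub>v y) = complex_of_real (\<Sum>k<n. d k * (cmod (y $ k))\<^sup>2)"
proof -
  have "(real_diag_mat n d *\<^sub>v y) $ k = complex_of_real (d k) * y $ k" if "k < n" for k
  proof -
    have "(\<Sum>j<n. real_diag_mat n d $$ (k,j) * y $ j)
        = (\<Sum>j<n. if j = k then complex_of_real (d k) * y $ j else 0)"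
      using that by (intro sum.cong) auto
    thus ?thesis using that y by (simp add: scalar_prod_def atLeast0LessThan sum.delta)
  qed
  hence "braket y (real_diag_mat n d *\<^sub>v y) = (\<Sum>k<n. complex_of_real (d k) * (cnj (y $ k) * y $ k))"
    using y by (simp add: braket_def ac_simps)
  also have "\<dots> = complex_of_real (\<Sum>k<n. d k * (cmod (y $ k))\<^sup>2)"
    unfolding of_real_sum by (intro sum.cong refl) (metis complex_norm_square mult.commute of_real_mult)
  finally show ?thesis .
qed

lemma unit_eigenvector_exists:
  assumes H: "H \<in> carrier_mat (Suc k) (Suc k)"
  shows "\<exists>u e. u \<in> carrier_vec (Suc k) \<and> braket u u = 1 \<and> H *\<^sub>v u = e \<cdot>\<^sub>v u"
proof -
  obtain as where cp: "char_poly H = (\<Prod>a\<leftarrow>as. [:- a, 1:])" and "length as = Suc k"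
    using char_poly_factorized[OF H] by auto
  then obtain e as' where "as = e # as'" by (cases as) auto
  hence "eigenvalue H e" using eigenvalue_root_char_poly[OF H] cp by simp
  then obtain v where v: "v \<in> carrier_vec (Suc k)" "v \<noteq> 0\<^sub>v (Suc k)" "H *\<^sub>v v = e \<cdot>\<^sub>v v"
    using H unfolding eigenvalue_def eigenvector_def by auto
  obtain c where c: "braket (c \<cdot>\<^sub>v v) (c \<cdot>\<^sub>v v) = 1"
    using exists_normalized_multiple[of v] v by auto
  have "H *\<^sub>v (c \<cdot>\<^sub>v v) = e \<cdot>\<^sub>v (c \<cdot>\<^sub>v v)"
    using v H by (metis mult_mat_vec smult_smult_assoc mult.commute)
  thus ?thesis using v c by (intro exI[of _ "c \<cdot>\<^sub>v v"] exI[of _ e]) auto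
qed

lemma self_adjoint_eigenvalue_real:
  assumes H: "H \<in> carrier_mat n n" "ctrans H = H"
    and u: "u \<in> carrier_vec n" "braket u u = 1" and Hu: "H *\<^sub>v u = e \<cdot>\<^sub>v u"
  shows "e = complex_of_real (Re e)"
proof -
  have "braket u (H *\<^sub>v u) = e" using Hu u by (simp add: braket_smult_right)
  moreover have "braket u (H *\<^sub>v u) = cnj e"
    using braket_mult_vec[OF H(1) u(1) u(1)] H Hu u by (simp add: braket_smult_left)
  ultimately have "cnj e = e" by simp
  thus ?thesis using arg_cong[OF \<open>cnj e = e\<close>, of Im] by (simp add: complex_eq_iff)
qed

text \<open>Conjugate by a unitary matrix whose first column is a unit eigenvector; by
  self-adjointness the first row, like the first column, vanishes off the diagonal.\<close>
lemma self_adjoint_deflation: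
  assumes Hc: "H \<in> carrier_mat (Suc k) (Suc k)" and Hs: "ctrans H = H"
  shows "\<exists>W r H'. unitary_mat (Suc k) W \<and> H' \<in> carrier_mat k k \<and> ctrans H' = H' \<and>
    H = W * four_block_mat (mat 1 1 (\<lambda>_. complex_of_real r)) (0\<^sub>m 1 k) (0\<^sub>m k 1) H' * ctrans W"
proof -
  let ?n = "Suc k"
  obtain u e where u: "u \<in> carrier_vec ?n" "braket u u = 1" and Hu: "H *\<^sub>v u = e \<cdot>\<^sub>v u"
    using unit_eigenvector_exists[OF Hc] by auto
  define r where "r = Re e"
  have er: "e = complex_of_real r"
    unfolding r_def by (rule self_adjoint_eigenvalue_real[OF Hc Hs u Hu])
  obtain W where W: "unitary_mat ?n W" and W0: "col W 0 = u"
    using unitary_mat_with_first_col[OF u] by auto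
  have Wc: "W \<in> carrier_mat ?n ?n" and WW: "ctrans W * W = 1\<^sub>m ?n" and WW': "W * ctrans W = 1\<^sub>m ?n"
    using unitary_matD[OF W] by auto
  define K where "K = ctrans W * H * W"
  have Kc: "K \<in> carrier_mat ?n ?n" unfolding K_def using Wc Hc by auto
  have Ks: "ctrans K = K" unfolding K_def using Wc Hc Hs by (simp add: ctrans_mult assoc_mult_mat_dims)
  have HK: "H = W * K * ctrans W"
  proof -
    have "W * K * ctrans W = (W * ctrans W) * H * (W * ctrans W)"
      unfolding K_def using Wc Hc by (simp add: assoc_mult_mat_dims)
    thus ?thesis using WW' Hc by simp
  qed
  have "col K 0 = (ctrans W * H) *\<^sub>v col W 0"
    unfolding K_def by (rule col_mult2[of _ ?n ?n]) (use Wc Hc in auto)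
  also have "\<dots> = ctrans W *\<^sub>v (H *\<^sub>v col W 0)"
    by (rule assoc_mult_mat_vec[of _ ?n ?n _ ?n]) (use Wc Hc u W0 in auto)
  also have "\<dots> = e \<cdot>\<^sub>v (ctrans W *\<^sub>v col W 0)"
    unfolding W0 Hu using Wc u by (simp add: mult_mat_vec[of _ ?n ?n])
  also have "ctrans W *\<^sub>v col W 0 = col (ctrans W * W) 0"
    using col_mult2[of "ctrans W" ?n ?n W ?n 0] Wc by simp
  finally have colK: "col K 0 = e \<cdot>\<^sub>v unit_vec ?n 0" unfolding WW by simp
  have col0: "K $$ (i, 0) = (if i = 0 then e else 0)" if "i < ?n" for i
    using arg_cong[OF colK, of "\<lambda>v. v $ i"] Kc that by auto
  have Kentries: "K $$ (i,j) = cnj (K $$ (j,i))" if "i < ?n" "j < ?n" for i j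
    using Ks Kc self_adjoint_iff that by blast
  define H' where "H' = mat k k (\<lambda>(i,j). K $$ (Suc i, Suc j))"
  have H'c: "H' \<in> carrier_mat k k" by (simp add: H'_def)
  have "\<forall>i<k. \<forall>j<k. H' $$ (i,j) = cnj (H' $$ (j,i))"
  proof (intro allI impI)
    fix i j assume "i < k" "j < k"
    thus "H' $$ (i,j) = cnj (H' $$ (j,i))" using Kentries[of "Suc i" "Suc j"] by (simp add: H'_def)
  qed
  hence H': "H' \<in> carrier_mat k k" "ctrans H' = H'" using H'c self_adjoint_iff[OF H'c] by blast+
  have row0: "K $$ (0, j) = (if j = 0 then e else 0)" if "j < ?n" for j
  proof (cases "j = 0")
    case True thus ?thesis using col0[of 0] by simp
  next
    case False thus ?thesis using Kentries[of 0 j] col0[of j] that by simp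
  qed
  have "K = four_block_mat (mat 1 1 (\<lambda>_. e)) (0\<^sub>m 1 k) (0\<^sub>m k 1) H'"
  proof (rule eq_matI)
    fix i j assume ij: "i < dim_row (four_block_mat (mat 1 1 (\<lambda>_. e)) (0\<^sub>m 1 k) (0\<^sub>m k 1) H')"
      "j < dim_col (four_block_mat (mat 1 1 (\<lambda>_. e)) (0\<^sub>m 1 k) (0\<^sub>m k 1) H')"
    thus "K $$ (i,j) = four_block_mat (mat 1 1 (\<lambda>_. e)) (0\<^sub>m 1 k) (0\<^sub>m k 1) H' $$ (i,j)"
      using ij col0[of i] row0[of j] H' by (auto simp: H'_def)
  qed (use Kc H' in auto)
  thus ?thesis using HK W H' er by blast
qed

lemma ctrans_four_block_mat:
  assumes "A \<in> carrier_mat r1 c1" "B \<in> carrier_mat r1 c2" "C \<in> carrier_mat r2 c1" "D \<in> carrier_mat r2 c2"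
  shows "ctrans (four_block_mat A B C D) = four_block_mat (ctrans A) (ctrans C) (ctrans B) (ctrans D)"
  using assms by (intro eq_matI) auto

theorem self_adjoint_spectral:
  assumes "H \<in> carrier_mat n n" "ctrans H = H"
  shows "\<exists>U d. unitary_mat n U \<and> H = U * real_diag_mat n d * ctrans U"
  using assms
proof (induction n arbitrary: H)
  case 0
  thus ?case by (intro exI[of _ "1\<^sub>m 0"]) (auto simp: unitary_mat_def intro!: eq_matI)
next
  case (Suc k)
  obtain W r H' where W: "unitary_mat (Suc k) W" and H': "H' \<in> carrier_mat k k" "ctrans H' = H'"
    and HW: "H = W * four_block_mat (mat 1 1 (\<lambda>_. complex_of_real r)) (0\<^sub>m 1 k) (0\<^sub>m k 1) H' * ctrans W"
    using self_adjoint_deflation[OF Suc.prems] by blast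
  obtain U' d' where U': "unitary_mat k U'" and H'U: "H' = U' * real_diag_mat k d' * ctrans U'"
    using Suc.IH[OF H'] by blast
  have U'c: "U' \<in> carrier_mat k k" and U'U: "ctrans U' * U' = 1\<^sub>m k"
    using unitary_matD[OF U'] by auto
  define B where "B = four_block_mat (1\<^sub>m 1) (0\<^sub>m 1 k) (0\<^sub>m k 1) U'"
  have Bc: "B \<in> carrier_mat (Suc k) (Suc k)" unfolding B_def using U'c by auto
  have Bs: "ctrans B = four_block_mat (1\<^sub>m 1) (0\<^sub>m 1 k) (0\<^sub>m k 1) (ctrans U')"
    unfolding B_def using U'c by (simp add: ctrans_four_block_mat[of _ 1 1 _ k _ k])
  have B: "unitary_mat (Suc k) B"
    unfolding unitary_mat_def Bs using Bc U'c U'U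
    by (auto simp: B_def mult_four_block_mat[of _ 1 1 _ k _ k _ _ 1 _ k])
  define d where "d = (\<lambda>i. if i = 0 then r else d' (i - 1))"
  define E where "E = mat 1 1 (\<lambda>_. complex_of_real r)"
  have "B * real_diag_mat (Suc k) d = four_block_mat E (0\<^sub>m 1 k) (0\<^sub>m k 1) (U' * real_diag_mat k d')"
  proof -
    have "real_diag_mat (Suc k) d = four_block_mat E (0\<^sub>m 1 k) (0\<^sub>m k 1) (real_diag_mat k d')"
      unfolding d_def E_def by (intro eq_matI) auto
    thus ?thesis unfolding B_def using U'c
      by (simp add: E_def mult_four_block_mat[of _ 1 1 _ k _ k _ _ 1 _ k])
  qed
  also have "\<dots> * ctrans B = four_block_mat E (0\<^sub>m 1 k) (0\<^sub>m k 1) H'"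
    unfolding Bs H'U using U'c mult_carrier_mat[OF mult_carrier_mat[OF U'c real_diag_mat_carrier] ctrans_carrier[OF U'c]]
    by (simp add: E_def mult_four_block_mat[of _ 1 1 _ k _ k _ _ 1 _ k])
  finally have BDB: "B * real_diag_mat (Suc k) d * ctrans B = four_block_mat E (0\<^sub>m 1 k) (0\<^sub>m k 1) H'" .
  have "H = W * (B * real_diag_mat (Suc k) d * ctrans B) * ctrans W"
    using HW unfolding BDB E_def .
  also have "\<dots> = (W * B) * real_diag_mat (Suc k) d * ctrans (W * B)"
    using unitary_matD(1)[OF W] Bc by (simp add: ctrans_mult assoc_mult_mat_dims)
  finally have "H = (W * B) * real_diag_mat (Suc k) d * ctrans (W * B)" .
  thus ?case using unitary_mat_mult[OF W B] by blast
qed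

lemma char_poly_unitary_diag:
  assumes "unitary_mat n U" "H = U * real_diag_mat n d * ctrans U"
  shows "char_poly H = (\<Prod>x\<leftarrow>map d [0..<n]. [:- complex_of_real x, 1:])"
proof -
  have U: "U \<in> carrier_mat n n" "U * ctrans U = 1\<^sub>m n" "ctrans U * U = 1\<^sub>m n"
    using unitary_matD[OF assms(1)] by auto
  have "similar_mat H (real_diag_mat n d)"
    by (rule similar_matI[of _ _ U "ctrans U" n]) (use U assms(2) in auto)
  hence "char_poly H = char_poly (real_diag_mat n d)" by (rule char_poly_similar)
  also have "\<dots> = (\<Prod>a\<leftarrow>diag_mat (real_diag_mat n d). [:- a, 1:])"
    by (rule char_poly_upper_triangular[of _ n]) (auto simp: upper_triangular_def)
  also have "diag_mat (real_diag_mat n d) = map (\<lambda>i. complex_of_real (d i)) [0..<n]"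
    unfolding diag_mat_def by auto
  finally show ?thesis by (simp add: o_def)
qed

lemma braket_unitary_diag:
  assumes U: "unitary_mat n U" and H: "H = U * real_diag_mat n d * ctrans U" and z: "z \<in> carrier_vec n"
  shows "braket z (H *\<^sub>v z) = complex_of_real (\<Sum>k<n. d k * (cmod ((ctrans U *\<^sub>v z) $ k))\<^sup>2)"
proof -
  have Uc: "U \<in> carrier_mat n n" using unitary_matD[OF U] by auto
  have w: "ctrans U *\<^sub>v z \<in> carrier_vec n" using mult_mat_vec_carrier[OF ctrans_carrier[OF Uc] z] .
  have "H *\<^sub>v z = U *\<^sub>v (real_diag_mat n d *\<^sub>v (ctrans U *\<^sub>v z))"
    unfolding H using Uc z w by (simp add: assoc_mult_mat_vec[of _ n n _ n])
  hence "braket z (H *\<^sub>v z) = braket (ctrans U *\<^sub>v z) (real_diag_mat n d *\<^sub>v (ctrans U *\<^sub>v z))"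
    using braket_mult_vec[OF Uc z mult_mat_vec_carrier[OF real_diag_mat_carrier w]] by simp
  thus ?thesis using braket_real_diag_mat[OF w] by simp
qed

lemma braket_unitary_diag_col:
  assumes U: "unitary_mat n U" and H: "H = U * real_diag_mat n d * ctrans U" and i: "i < n"
  shows "braket (col U i) (H *\<^sub>v col U i) = complex_of_real (d i)"
proof -
  have Uc: "U \<in> carrier_mat n n" and UU: "ctrans U * U = 1\<^sub>m n" using unitary_matD[OF U] by auto
  have "ctrans U *\<^sub>v col U i = unit_vec n i"
    using col_mult2[of "ctrans U" n n U n i] Uc i unfolding UU by simp
  hence "(\<Sum>k<n. d k * (cmod ((ctrans U *\<^sub>v col U i) $ k))\<^sup>2) = (\<Sum>k<n. if k = i then d k else 0)"
    by (intro sum.cong) (auto simp: unit_vec_def)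
  also have "\<dots> = d i" using i by (simp add: sum.delta)
  finally show ?thesis using braket_unitary_diag[OF U H, of "col U i"] Uc i by simp
qed

section \<open>Characteristic polynomials\<close>

lemma order_prod_linear_factors:
  fixes as :: "'a :: field list"
  shows "order a (\<Prod>x\<leftarrow>as. [:- x, 1:]) = count (mset as) a"
proof (induction as)
  case (Cons b as)
  have nz: "(\<Prod>x\<leftarrow>as. [:- x, 1:]) \<noteq> 0" by (subst prod_list_zero_iff) auto
  have "order a ([:- b, 1:] * (\<Prod>x\<leftarrow>as. [:- x, 1:])) = order a [:- b, 1:] + order a (\<Prod>x\<leftarrow>as. [:- x, 1:])"
    using nz by (intro order_mult) (metis mult_eq_0_iff pCons_eq_0_iff one_neq_zero)
  also have "order a [:- b, 1:] = (if b = a then 1 else 0)"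
    using order_power_n_n[of a 1] by (cases "b = a") (auto simp: order_0I)
  finally show ?case using Cons by auto
qed simp

lemma mset_eq_of_prod_linear_factors_eq:
  fixes xs ys :: "real list"
  assumes "(\<Prod>x\<leftarrow>xs. [:- complex_of_real x, 1:]) = (\<Prod>x\<leftarrow>ys. [:- complex_of_real x, 1:])"
  shows "mset xs = mset ys"
proof -
  have "(\<Prod>x\<leftarrow>map complex_of_real xs. [:- x, 1:]) = (\<Prod>x\<leftarrow>map complex_of_real ys. [:- x, 1:])"
    using assms by (simp add: o_def)
  hence "mset (map complex_of_real xs) = mset (map complex_of_real ys)"
    by (intro multiset_eqI) (metis order_prod_linear_factors)
  hence "image_mset Re (mset (map complex_of_real xs)) = image_mset Re (mset (map complex_of_real ys))"
    by simp
  thus ?thesis by (simp add: image_mset.compositionality o_def)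
qed

lemma mset_eigenvalues_unitary_diag:
  assumes "unitary_mat n U" "H = U * real_diag_mat n d * ctrans U"
    and "char_poly H = (\<Prod>x\<leftarrow>xs. [:- complex_of_real x, 1:])"
  shows "mset (map d [0..<n]) = mset xs"
  using assms char_poly_unitary_diag mset_eq_of_prod_linear_factors_eq by metis

lemma char_poly_eq_det:
  assumes "M \<in> carrier_mat k k"
  shows "char_poly M = det ([:0,1:] \<cdot>\<^sub>m 1\<^sub>m k - map_mat (\<lambda>a. [:a:]) M)"
  unfolding char_poly_def char_poly_matrix_def
  by (rule arg_cong[of _ _ det], rule eq_matI) (use assms in auto)

lemma det_four_block_scalar_diag:
  fixes y :: "'a :: idom"
  assumes B: "B \<in> carrier_mat m n" and C: "C \<in> carrier_mat n m"
  shows "det (four_block_mat (y \<cdot>\<^sub>m 1\<^sub>m m) B C (y \<cdot>\<^sub>m 1\<^sub>m n)) * y ^ m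
       = det (y * y \<cdot>\<^sub>m 1\<^sub>m m - B * C) * y ^ n"
proof -
  let ?M = "four_block_mat (y \<cdot>\<^sub>m 1\<^sub>m m) B C (y \<cdot>\<^sub>m 1\<^sub>m n)"
  let ?N = "four_block_mat (y \<cdot>\<^sub>m 1\<^sub>m m) (0\<^sub>m m n) (- C) (1\<^sub>m n)"
  have M: "?M \<in> carrier_mat (m+n) (m+n)" and N: "?N \<in> carrier_mat (m+n) (m+n)" using B C by auto
  have MN: "?M * ?N = four_block_mat (y * y \<cdot>\<^sub>m 1\<^sub>m m - B * C) B (0\<^sub>m n m) (y \<cdot>\<^sub>m 1\<^sub>m n)"
    by (subst mult_four_block_mat[of _ m m _ n _ n _ _ m _ n]) (use B C in auto)
  have "det ?M * det ?N = det (?M * ?N)" by (rule det_mult[OF M N, symmetric])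
  also have "\<dots> = det (y * y \<cdot>\<^sub>m 1\<^sub>m m - B * C) * det (y \<cdot>\<^sub>m 1\<^sub>m n)"
    unfolding MN by (rule det_four_block_mat_lower_left_zero) (use B C in auto)
  also have "det ?N = det (y \<cdot>\<^sub>m 1\<^sub>m m) * det (1\<^sub>m n)"
    by (rule det_four_block_mat_upper_right_zero) (use C in auto)
  finally show ?thesis by (simp add: mult.commute)
qed

lemma sylvester_det:
  fixes x :: "'a :: idom"
  assumes B: "B \<in> carrier_mat m n" and C: "C \<in> carrier_mat n m"
  shows "x ^ n * det (x \<cdot>\<^sub>m 1\<^sub>m m - B * C) = x ^ m * det (x \<cdot>\<^sub>m 1\<^sub>m n - C * B)"
proof -
  let ?M = "four_block_mat (x \<cdot>\<^sub>m 1\<^sub>m m) B C (1\<^sub>m n)"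
  let ?N1 = "four_block_mat (1\<^sub>m m) (0\<^sub>m m n) (- C) (1\<^sub>m n)"
  let ?N2 = "four_block_mat (1\<^sub>m m) (0\<^sub>m m n) (- C) (x \<cdot>\<^sub>m 1\<^sub>m n)"
  have M: "?M \<in> carrier_mat (m+n) (m+n)" and N1: "?N1 \<in> carrier_mat (m+n) (m+n)"
    and N2: "?N2 \<in> carrier_mat (m+n) (m+n)" using B C by auto
  have MN1: "?M * ?N1 = four_block_mat (x \<cdot>\<^sub>m 1\<^sub>m m - B * C) B (0\<^sub>m n m) (1\<^sub>m n)"
    by (subst mult_four_block_mat[of _ m m _ n _ n _ _ m _ n]) (use B C in auto)
  have N2M: "?N2 * ?M = four_block_mat (x \<cdot>\<^sub>m 1\<^sub>m m) B (0\<^sub>m n m) (x \<cdot>\<^sub>m 1\<^sub>m n - C * B)"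
    by (subst mult_four_block_mat[of _ m m _ n _ n _ _ m _ n]) (use B C in auto)
  have "det ?M * det ?N1 = det (?M * ?N1)" by (rule det_mult[OF M N1, symmetric])
  also have "\<dots> = det (x \<cdot>\<^sub>m 1\<^sub>m m - B * C) * det (1\<^sub>m n)"
    unfolding MN1 by (rule det_four_block_mat_lower_left_zero) (use B C in auto)
  also have "det ?N1 = det (1\<^sub>m m) * det (1\<^sub>m n)"
    by (rule det_four_block_mat_upper_right_zero) (use C in auto)
  finally have M_eq: "det ?M = det (x \<cdot>\<^sub>m 1\<^sub>m m - B * C)" by simp
  have "det ?N2 * det ?M = det (?N2 * ?M)" by (rule det_mult[OF N2 M, symmetric])
  also have "\<dots> = det (x \<cdot>\<^sub>m 1\<^sub>m m) * det (x \<cdot>\<^sub>m 1\<^sub>m n - C * B)"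
    unfolding N2M by (rule det_four_block_mat_lower_left_zero) (use B C in auto)
  also have "det ?N2 = det (1\<^sub>m m) * det (x \<cdot>\<^sub>m 1\<^sub>m n)"
    by (rule det_four_block_mat_upper_right_zero) (use C in auto)
  finally show ?thesis unfolding M_eq by simp
qed

lemma char_poly_ctrans_mult_commute:
  assumes A: "A \<in> carrier_mat n m"
  shows "[:0,1:] ^ n * char_poly (ctrans A * A) = [:0,1:] ^ m * char_poly (A * ctrans A)"
proof -
  let ?C = "\<lambda>M. map_mat (\<lambda>a. [:a:]) M"
  have B: "?C (ctrans A) \<in> carrier_mat m n" and C: "?C A \<in> carrier_mat n m" using A by auto
  have "?C (ctrans A) * ?C A = ?C (ctrans A * A)" "?C A * ?C (ctrans A) = ?C (A * ctrans A)"
    by (rule map_poly_mult(1)[symmetric]; use A in auto)+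
  moreover have "char_poly (ctrans A * A) = det ([:0,1:] \<cdot>\<^sub>m 1\<^sub>m m - ?C (ctrans A * A))"
    "char_poly (A * ctrans A) = det ([:0,1:] \<cdot>\<^sub>m 1\<^sub>m n - ?C (A * ctrans A))"
    by (rule char_poly_eq_det; use A in auto)+
  ultimately show ?thesis using sylvester_det[OF B C, of "[:0,1:]"] by simp
qed

lemma char_poly_gram_block_pcompose:
  assumes A: "A \<in> carrier_mat n m"
  shows "char_poly (four_block_mat (1\<^sub>m m) (ctrans A) A (1\<^sub>m n)) * [:-1,1:] ^ m
     = (char_poly (ctrans A * A) \<circ>\<^sub>p ([:-1,1:] * [:-1,1:])) * [:-1,1:] ^ n"
proof -
  let ?y = "[:-1,1:] :: complex poly"
  let ?C = "\<lambda>M. map_mat (\<lambda>a. [:a:]) M"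
  let ?G = "four_block_mat (1\<^sub>m m) (ctrans A) A (1\<^sub>m n)"
  have B: "- ?C (ctrans A) \<in> carrier_mat m n" and C: "- ?C A \<in> carrier_mat n m" using A by auto
  have cpm: "char_poly_matrix ?G = four_block_mat (?y \<cdot>\<^sub>m 1\<^sub>m m) (- ?C (ctrans A)) (- ?C A) (?y \<cdot>\<^sub>m 1\<^sub>m n)"
    unfolding char_poly_matrix_def by (rule eq_matI) (use A in auto)
  have BC: "(- ?C (ctrans A)) * (- ?C A) = ?C (ctrans A * A)"
    using map_poly_mult(1)[of "ctrans A" m n A m] A by auto
  have "comm_ring_hom (\<lambda>q::complex poly. q \<circ>\<^sub>p (?y * ?y))"
    by standard (auto simp: pcompose_add pcompose_mult)
  moreover have "map_mat (\<lambda>q. q \<circ>\<^sub>p (?y * ?y)) (char_poly_matrix (ctrans A * A))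
      = ?y * ?y \<cdot>\<^sub>m 1\<^sub>m m - ?C (ctrans A * A)"
    unfolding char_poly_matrix_def by (rule eq_matI) (use A in auto)
  ultimately have "det (?y * ?y \<cdot>\<^sub>m 1\<^sub>m m - ?C (ctrans A * A)) = char_poly (ctrans A * A) \<circ>\<^sub>p (?y * ?y)"
    unfolding char_poly_def by (metis comm_ring_hom.hom_det)
  thus ?thesis unfolding char_poly_def cpm
    using det_four_block_scalar_diag[OF B C, of ?y] unfolding BC by simp
qed

lemma prod_list_map_mult:
  "(\<Prod>x\<leftarrow>xs. f x) * (\<Prod>x\<leftarrow>xs. g x) = (\<Prod>x\<leftarrow>xs. f x * g x)"
  for f g :: "'b \<Rightarrow> 'a :: comm_monoid_mult"
  by (induction xs) (auto simp: ac_simps)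

lemma pcompose_prod_list_linear:
  "(\<Prod>x\<leftarrow>xs. [:- c x, 1:]) \<circ>\<^sub>p q = (\<Prod>x\<leftarrow>xs. q - [:c x:])" for q :: "complex poly"
proof (induction xs)
  case (Cons a xs)
  have lin: "[:- c a, 1:] \<circ>\<^sub>p q = q - [:c a:]"
    by (rule poly_eq_poly_eq_iff[THEN iffD1], rule ext) (simp add: poly_pcompose)
  have "(\<Prod>x\<leftarrow>a # xs. [:- c x, 1:]) \<circ>\<^sub>p q = ([:- c a, 1:] \<circ>\<^sub>p q) * ((\<Prod>x\<leftarrow>xs. [:- c x, 1:]) \<circ>\<^sub>p q)"
    by (simp only: list.map prod_list.Cons pcompose_mult)
  thus ?case unfolding Cons.IH lin by (simp only: list.map prod_list.Cons)
qed simp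

lemma pcompose_monom_power: "[:0, 1:] ^ k \<circ>\<^sub>p q = q ^ k" for q :: "complex poly"
  by (rule poly_eq_poly_eq_iff[THEN iffD1], rule ext) (simp add: poly_pcompose)

lemma char_poly_gram_block:
  assumes A: "A \<in> carrier_mat n m" and ls: "length s = min n m"
    and cp: "char_poly (ctrans A * A) = (\<Prod>x\<leftarrow>s. [:- complex_of_real (x\<^sup>2), 1:]) * [:0,1:] ^ (m - length s)"
  shows "char_poly (four_block_mat (1\<^sub>m m) (ctrans A) A (1\<^sub>m n))
    = (\<Prod>x\<leftarrow>map (\<lambda>x. 1 + x) (pad (m + n) (s @ map uminus s)). [:- complex_of_real x, 1:])"
proof -
  let ?y = "[:-1,1:] :: complex poly"
  let ?Q = "\<Prod>x\<leftarrow>s. ?y * ?y - [:complex_of_real (x\<^sup>2):]"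
  define t where "t = length s"
  have tm: "t \<le> m" "t \<le> n" using ls unfolding t_def by auto
  have "(\<Prod>x\<leftarrow>map (\<lambda>x. 1 + x) (pad (m + n) (s @ map uminus s)). [:- complex_of_real x, 1:])
      = (\<Prod>x\<leftarrow>s. [:- complex_of_real (1 + x), 1:] * [:- complex_of_real (1 + - x), 1:]) * ?y ^ (m + n - 2 * t)"
    unfolding pad_def t_def prod_list_map_mult[symmetric] by (simp add: o_def mult.assoc mult_2)
  also have "(\<Prod>x\<leftarrow>s. [:- complex_of_real (1 + x), 1:] * [:- complex_of_real (1 + - x), 1:]) = ?Q"
    by (intro arg_cong[of _ _ prod_list] map_cong refl poly_eq_poly_eq_iff[THEN iffD1] ext)
      (simp add: algebra_simps power2_eq_square)
  finally have T: "(\<Prod>x\<leftarrow>map (\<lambda>x. 1 + x) (pad (m + n) (s @ map uminus s)). [:- complex_of_real x, 1:])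
      = ?Q * ?y ^ (m + n - 2 * t)" .
  have "char_poly (ctrans A * A) \<circ>\<^sub>p (?y * ?y) = ?Q * (?y * ?y) ^ (m - t)"
    unfolding cp t_def by (simp add: pcompose_mult pcompose_prod_list_linear pcompose_monom_power)
  hence "char_poly (four_block_mat (1\<^sub>m m) (ctrans A) A (1\<^sub>m n)) * ?y ^ m = ?Q * (?y * ?y) ^ (m - t) * ?y ^ n"
    using char_poly_gram_block_pcompose[OF A] by simp
  also have "\<dots> = ?Q * ?y ^ (m + n - 2 * t) * ?y ^ m"
  proof -
    have "(?y * ?y) ^ (m - t) * ?y ^ n = ?y ^ (2 * (m - t) + n)"
      by (simp add: power_add power_mult power2_eq_square[symmetric])
    also have "2 * (m - t) + n = (m + n - 2 * t) + m" using tm by auto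
    finally show ?thesis by (simp add: power_add ac_simps)
  qed
  finally show ?thesis unfolding T by simp
qed

section \<open>A rearrangement inequality for doubly substochastic matrices\<close>

definition doubly_substochastic :: "nat \<Rightarrow> nat \<Rightarrow> (nat \<Rightarrow> nat \<Rightarrow> real) \<Rightarrow> bool" where
  "doubly_substochastic K L c \<longleftrightarrow> (\<forall>k<K. \<forall>l<L. 0 \<le> c k l)
     \<and> (\<forall>k<K. (\<Sum>l<L. c k l) \<le> 1) \<and> (\<forall>l<L. (\<Sum>k<K. c k l) \<le> 1)"

lemma doubly_substochasticD:
  assumes "doubly_substochastic K L c"
  shows "\<And>k l. k < K \<Longrightarrow> l < L \<Longrightarrow> 0 \<le> c k l"
    and "\<And>k. k < K \<Longrightarrow> (\<Sum>l<L. c k l) \<le> 1" and "\<And>l. l < L \<Longrightarrow> (\<Sum>k<K. c k l) \<le> 1"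
  using assms unfolding doubly_substochastic_def by auto

lemma doubly_substochastic_permute:
  assumes c: "doubly_substochastic K L c" and p: "p permutes {..<K}" and q: "q permutes {..<L}"
  shows "doubly_substochastic K L (\<lambda>k l. c (p k) (q l))"
proof -
  have pK: "k < K \<Longrightarrow> p k < K" and qL: "l < L \<Longrightarrow> q l < L" for k l
    using permutes_in_image[OF p] permutes_in_image[OF q] by auto
  have "(\<Sum>l<L. c (p k) (q l)) = (\<Sum>l<L. c (p k) l)" "(\<Sum>k<K. c (p k) (q l)) = (\<Sum>k<K. c k (q l))"
    for k l
    by (subst (2) sum.permute[OF q], simp add: o_def) (subst (2) sum.permute[OF p], simp add: o_def)
  thus ?thesis using doubly_substochasticD[OF c] pK qL unfolding doubly_substochastic_def by auto
qed

lemma weighted_sum_le_sum_prefix: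
  fixes y d :: "nat \<Rightarrow> real"
  assumes anti: "\<And>i j. i \<le> j \<Longrightarrow> j < L \<Longrightarrow> y j \<le> y i"
    and ynn: "\<And>i. i < L \<Longrightarrow> y i \<ge> 0"
    and d01: "\<And>i. i < L \<Longrightarrow> 0 \<le> d i \<and> d i \<le> 1"
    and dsum: "(\<Sum>i<L. d i) \<le> real r"
  shows "(\<Sum>i<L. y i * d i) \<le> (\<Sum>i<min r L. y i)"
proof (cases "r < L")
  case False
  thus ?thesis using d01 ynn by (auto intro!: sum_mono simp: mult_left_le)
next
  case True
  have split: "{..<L} = {..<r} \<union> {r..<L}" using True by auto
  have "(\<Sum>i<L. y i * d i) - (\<Sum>i<r. y i) = (\<Sum>i<r. y i * (d i - 1)) + (\<Sum>i\<in>{r..<L}. y i * d i)"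
    unfolding split by (subst sum.union_disjoint) (auto simp: algebra_simps sum_subtractf)
  also have "\<dots> \<le> (\<Sum>i<r. y r * (d i - 1)) + (\<Sum>i\<in>{r..<L}. y r * d i)"
  proof (rule add_mono; rule sum_mono)
    fix i assume "i \<in> {..<r}"
    thus "y i * (d i - 1) \<le> y r * (d i - 1)" using anti[of i r] True d01[of i]
      by (intro mult_right_mono_neg) auto
  next
    fix i assume "i \<in> {r..<L}"
    thus "y i * d i \<le> y r * d i" using anti[of r i] d01[of i] by (intro mult_right_mono) auto
  qed
  also have "\<dots> = y r * ((\<Sum>i<L. d i) - real r)"
    unfolding split by (subst sum.union_disjoint) (auto simp: algebra_simps sum_subtractf sum_distrib_left)
  also have "\<dots> \<le> 0" using dsum ynn[OF True] by (intro mult_nonneg_nonpos) auto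
  finally show ?thesis using True by simp
qed

text \<open>Abel summation, by induction: subtract the last value x_K from the sequence.\<close>
lemma weighted_sum_mono_partial_sums:
  fixes x z w :: "nat \<Rightarrow> real"
  assumes "\<And>i j. i \<le> j \<Longrightarrow> j < K \<Longrightarrow> x j \<le> x i"
    and "\<And>i. i < K \<Longrightarrow> x i \<ge> 0"
    and "\<And>r. r \<le> K \<Longrightarrow> (\<Sum>k<r. z k) \<le> (\<Sum>k<r. w k)"
  shows "(\<Sum>k<K. x k * z k) \<le> (\<Sum>k<K. x k * w k)"
  using assms
proof (induction K arbitrary: x)
  case (Suc K)
  define x' where "x' = (\<lambda>k. x k - x K)"
  have IH: "(\<Sum>k<K. x' k * z k) \<le> (\<Sum>k<K. x' k * w k)"
    using Suc.prems(1)[of _ K] Suc.prems by (intro Suc.IH) (auto simp: x'_def)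
  have last: "x K * (\<Sum>k<Suc K. z k) \<le> x K * (\<Sum>k<Suc K. w k)"
    using Suc.prems(2)[of K] Suc.prems(3)[of "Suc K"] by (intro mult_left_mono) auto
  have split: "(\<Sum>k<Suc K. x k * f k) = (\<Sum>k<K. x' k * f k) + x K * (\<Sum>k<Suc K. f k)"
    for f :: "nat \<Rightarrow> real"
    unfolding x'_def by (simp add: algebra_simps sum.distrib sum_distrib_left sum_subtractf)
  show ?case unfolding split[of z] split[of w] using IH last by linarith
qed simp

lemma doubly_substochastic_sorted_bound:
  fixes x y :: "nat \<Rightarrow> real"
  assumes xa: "\<And>i j. i \<le> j \<Longrightarrow> j < K \<Longrightarrow> x j \<le> x i" and xn: "\<And>i. i < K \<Longrightarrow> x i \<ge> 0"
    and ya: "\<And>i j. i \<le> j \<Longrightarrow> j < L \<Longrightarrow> y j \<le> y i" and yn: "\<And>i. i < L \<Longrightarrow> y i \<ge> 0"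
    and c: "doubly_substochastic K L c"
  shows "(\<Sum>k<K. \<Sum>l<L. x k * y l * c k l) \<le> (\<Sum>k<K. x k * (if k < L then y k else 0))"
proof -
  note c = doubly_substochasticD[OF c]
  define w where "w = (\<lambda>k. if k < L then y k else 0)"
  have "(\<Sum>k<K. \<Sum>l<L. x k * y l * c k l) = (\<Sum>k<K. x k * (\<Sum>l<L. y l * c k l))"
    by (simp add: sum_distrib_left mult.assoc)
  also have "\<dots> \<le> (\<Sum>k<K. x k * w k)"
  proof (rule weighted_sum_mono_partial_sums[OF xa xn])
    fix r assume r: "r \<le> K"
    have "(\<Sum>k<r. \<Sum>l<L. y l * c k l) = (\<Sum>l<L. y l * (\<Sum>k<r. c k l))"
      by (simp add: sum_distrib_left sum.swap[of _ "{..<r}"])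
    also have "\<dots> \<le> (\<Sum>i<min r L. y i)"
    proof (rule weighted_sum_le_sum_prefix[OF ya yn])
      fix l assume l: "l < L"
      have "(\<Sum>k<r. c k l) \<le> (\<Sum>k<K. c k l)" using r c(1) l by (intro sum_mono2) auto
      thus "0 \<le> (\<Sum>k<r. c k l) \<and> (\<Sum>k<r. c k l) \<le> 1"
        using c(3)[OF l] c(1) l r by (auto intro!: sum_nonneg)
    next
      have "(\<Sum>l<L. \<Sum>k<r. c k l) = (\<Sum>k<r. \<Sum>l<L. c k l)" by (rule sum.swap)
      also have "\<dots> \<le> (\<Sum>k<r. 1)" using c(2) r by (intro sum_mono) auto
      finally show "(\<Sum>l<L. \<Sum>k<r. c k l) \<le> real r" by simp
    qed
    also have "\<dots> = (\<Sum>k<r. w k)"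
      by (rule sum.mono_neutral_cong_left) (auto simp: w_def)
    finally show "(\<Sum>k<r. \<Sum>l<L. y l * c k l) \<le> (\<Sum>k<r. w k)" .
  qed
  finally show ?thesis unfolding w_def .
qed

lemma sort_desc_mset_eq: "mset xs = mset ys \<Longrightarrow> sort_desc xs = sort_desc ys"
  unfolding sort_desc_def using properties_for_sort[of "sort ys" xs] by simp

lemma sort_desc_length [simp]: "length (sort_desc xs) = length xs"
  and mset_sort_desc [simp]: "mset (sort_desc xs) = mset xs"
  by (simp_all add: sort_desc_def)

lemma set_sort_desc [simp]: "set (sort_desc xs) = set xs"
  by (simp add: sort_desc_def)

lemma sort_desc_antimono: "i \<le> j \<Longrightarrow> j < length xs \<Longrightarrow> sort_desc xs ! j \<le> sort_desc xs ! i"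
  unfolding sort_desc_def by (simp add: rev_nth, intro sorted_nth_mono) auto

lemma dotp_eq_sum:
  assumes "length xs = K" "length ys = L"
  shows "dotp xs ys = (\<Sum>k<K. xs ! k * (if k < L then ys ! k else 0))"
proof -
  define M where "M = max K L"
  have pad: "pad M zs ! i = (if i < length zs then zs ! i else 0)" if "length zs \<le> M" "i < M"
    for zs :: "real list" and i
    using that unfolding pad_def by (auto simp: nth_append)
  have "dotp xs ys = (\<Sum>i<M. pad M xs ! i * pad M ys ! i)"
    unfolding dotp_def Let_def M_def[symmetric] assms sum_list_sum_nth
    using assms by (simp add: atLeast0LessThan pad_def M_def)
  also have "\<dots> = (\<Sum>i<M. (if i < K then xs ! i else 0) * (if i < L then ys ! i else 0))"
    using pad assms by (intro sum.cong) (auto simp: M_def)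
  also have "\<dots> = (\<Sum>i<K. (if i < K then xs ! i else 0) * (if i < L then ys ! i else 0))"
    by (rule sum.mono_neutral_right) (auto simp: M_def)
  finally show ?thesis by simp
qed

theorem doubly_substochastic_rearrangement:
  fixes xs ys :: "real list"
  assumes xn: "\<And>x. x \<in> set xs \<Longrightarrow> x \<ge> 0" and yn: "\<And>y. y \<in> set ys \<Longrightarrow> y \<ge> 0"
    and c: "doubly_substochastic (length xs) (length ys) c"
  shows "(\<Sum>k<length xs. \<Sum>l<length ys. xs ! k * ys ! l * c k l) \<le> dotp (sort_desc xs) (sort_desc ys)"
proof -
  define K where "K = length xs"
  define L where "L = length ys"
  obtain p where p: "p permutes {..<K}" and pl: "permute_list p xs = sort_desc xs"
    using mset_eq_permutation[of "sort_desc xs" xs] unfolding K_def by auto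
  obtain q where q: "q permutes {..<L}" and ql: "permute_list q ys = sort_desc ys"
    using mset_eq_permutation[of "sort_desc ys" ys] unfolding L_def by auto
  have xp: "sort_desc xs ! k = xs ! p k" if "k < K" for k
    unfolding pl[symmetric] using permute_list_nth[of p xs k] p that K_def by auto
  have yq: "sort_desc ys ! l = ys ! q l" if "l < L" for l
    unfolding ql[symmetric] using permute_list_nth[of q ys l] q that L_def by auto
  have "(\<Sum>k<K. \<Sum>l<L. xs ! k * ys ! l * c k l) = (\<Sum>k<K. \<Sum>l<L. xs ! p k * ys ! l * c (p k) l)"
    by (subst sum.permute[OF p]) (simp add: o_def)
  also have "\<dots> = (\<Sum>k<K. \<Sum>l<L. xs ! p k * ys ! q l * c (p k) (q l))"
    by (rule sum.cong[OF refl], subst sum.permute[OF q]) (simp add: o_def)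
  also have "\<dots> = (\<Sum>k<K. \<Sum>l<L. sort_desc xs ! k * sort_desc ys ! l * c (p k) (q l))"
    using xp yq by (intro sum.cong refl) auto
  also have "\<dots> \<le> (\<Sum>k<K. sort_desc xs ! k * (if k < L then sort_desc ys ! k else 0))"
  proof (rule doubly_substochastic_sorted_bound)
    show "doubly_substochastic K L (\<lambda>k l. c (p k) (q l))"
      using doubly_substochastic_permute[OF c[folded K_def L_def] p q] .
  qed (use sort_desc_antimono xn yn nth_mem[of _ "sort_desc xs"] nth_mem[of _ "sort_desc ys"]
         in \<open>auto simp: K_def L_def\<close>)
  also have "\<dots> = dotp (sort_desc xs) (sort_desc ys)"
    by (rule dotp_eq_sum[symmetric]) (auto simp: K_def L_def)
  finally show ?thesis unfolding K_def L_def .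
qed

section \<open>Diagonal Gram matrices give doubly substochastic weights\<close>

lemma real_diag_gram_eq_col_norm:
  assumes "P \<in> carrier_mat N K" "ctrans P * P = real_diag_mat K g" "l < K"
  shows "g l = (\<Sum>k<N. (cmod (P $$ (k,l)))\<^sup>2)"
proof -
  have "complex_of_real (g l) = (ctrans P * P) $$ (l,l)" using assms by simp
  also have "\<dots> = complex_of_real (\<Sum>k<N. (cmod (P $$ (k,l)))\<^sup>2)" by (rule diag_ctrans_mult[OF assms(1,3)])
  finally show ?thesis by (simp only: of_real_eq_iff)
qed

text \<open>Bessel's inequality. With Q = F F^* one has Q^2 = F h F^*, hence
  Q_kk^2 \<le> (Q^2)_kk \<le> Q_kk.\<close>
lemma row_norm_le_1_of_gram_diag:
  assumes F: "F \<in> carrier_mat r K" and FF: "ctrans F * F = real_diag_mat K h"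
    and h: "\<And>l. l < K \<Longrightarrow> 0 \<le> h l \<and> h l \<le> 1" and k: "k < r"
  shows "(\<Sum>l<K. (cmod (F $$ (k,l)))\<^sup>2) \<le> 1"
proof -
  define q where "q = (\<Sum>l<K. (cmod (F $$ (k,l)))\<^sup>2)"
  define Q where "Q = F * ctrans F"
  have Q: "Q \<in> carrier_mat r r" unfolding Q_def using F by auto
  have q0: "q \<ge> 0" unfolding q_def by (auto intro: sum_nonneg)
  have Qkk: "Q $$ (k,k) = complex_of_real q" unfolding Q_def q_def by (rule diag_mult_ctrans[OF F k])
  have "Q * Q = F * real_diag_mat K h * ctrans F"
    unfolding Q_def FF[symmetric] using F by (simp add: assoc_mult_mat_dims)
  hence "(Q * Q) $$ (k,k) = ((F * real_diag_mat K h) * ctrans F) $$ (k,k)" by simp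
  also have "\<dots> = (\<Sum>l<K. complex_of_real (h l) * (F $$ (k,l) * cnj (F $$ (k,l))))"
    using F k mult_real_diag_mat_index[OF F k]
    by (simp add: scalar_prod_def atLeast0LessThan ac_simps)
  also have "\<dots> = complex_of_real (\<Sum>l<K. h l * (cmod (F $$ (k,l)))\<^sup>2)"
    unfolding of_real_sum by (intro sum.cong refl) (metis complex_norm_square of_real_mult)
  finally have QQ1: "(Q * Q) $$ (k,k) = complex_of_real (\<Sum>l<K. h l * (cmod (F $$ (k,l)))\<^sup>2)" .
  have "(Q * Q) $$ (k,k) = (Q * ctrans Q) $$ (k,k)"
    unfolding Q_def using F by (simp add: ctrans_mult)
  also have "\<dots> = complex_of_real (\<Sum>j<r. (cmod (Q $$ (k,j)))\<^sup>2)" by (rule diag_mult_ctrans[OF Q k])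
  finally have "(\<Sum>j<r. (cmod (Q $$ (k,j)))\<^sup>2) = (\<Sum>l<K. h l * (cmod (F $$ (k,l)))\<^sup>2)"
    unfolding QQ1 of_real_eq_iff by simp
  moreover have "(\<Sum>l<K. h l * (cmod (F $$ (k,l)))\<^sup>2) \<le> q"
    unfolding q_def using h by (intro sum_mono) (auto intro: mult_left_le_one_le)
  moreover have "q * q \<le> (\<Sum>j<r. (cmod (Q $$ (k,j)))\<^sup>2)"
    using member_le_sum[of k "{..<r}" "\<lambda>j. (cmod (Q $$ (k,j)))\<^sup>2"] k q0
    unfolding Qkk by (simp add: power2_eq_square)
  ultimately have "q * q \<le> q * 1" by simp
  thus ?thesis using q0 unfolding q_def[symmetric]
    by (cases "q > 0") (auto simp: mult_le_cancel_left_pos)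
qed

text \<open>The weights are c_kl = |P_kl|^2 / g_l (and 0 where g_l = 0). Their rows are
  bounded by Bessel's inequality applied to P with its nonzero columns normalised.\<close>
lemma doubly_substochastic_of_gram_diag:
  assumes P: "P \<in> carrier_mat N K" and PP: "ctrans P * P = real_diag_mat K g"
  shows "\<exists>c. doubly_substochastic N K c \<and>
           (\<forall>k<N. (\<Sum>l<K. (cmod (P $$ (k,l)))\<^sup>2) = (\<Sum>l<K. g l * c k l))"
proof -
  note g_eq = real_diag_gram_eq_col_norm[OF P PP]
  define sc where "sc = (\<lambda>l. if g l > 0 then 1 / sqrt (g l) else 0)"
  define c where "c = (\<lambda>k l. (cmod (P $$ (k,l)))\<^sup>2 * (sc l)\<^sup>2)"
  define F where "F = P * real_diag_mat K sc"
  have Fc: "F \<in> carrier_mat N K" unfolding F_def using P by auto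
  have "ctrans F * F = real_diag_mat K sc * (ctrans P * P) * real_diag_mat K sc"
    unfolding F_def using P by (simp add: ctrans_mult assoc_mult_mat_dims)
  hence FF: "ctrans F * F = real_diag_mat K (\<lambda>l. sc l * g l * sc l)"
    unfolding PP real_diag_mat_mult .
  have h01: "0 \<le> sc l * g l * sc l \<and> sc l * g l * sc l \<le> 1" for l
    unfolding sc_def by (cases "g l > 0") (auto simp: field_simps)
  have rows: "(\<Sum>l<K. c k l) \<le> 1" if k: "k < N" for k
  proof -
    have "(\<Sum>l<K. c k l) = (\<Sum>l<K. (cmod (F $$ (k,l)))\<^sup>2)"
      using mult_real_diag_mat_index[OF P k] unfolding c_def F_def
      by (intro sum.cong refl) (simp add: norm_mult power_mult_distrib)
    also have "\<dots> \<le> 1" by (rule row_norm_le_1_of_gram_diag[OF Fc FF h01 k])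
    finally show ?thesis .
  qed
  have cols: "(\<Sum>k<N. c k l) \<le> 1" if l: "l < K" for l
  proof -
    have "(\<Sum>k<N. c k l) = sc l * g l * sc l" unfolding c_def g_eq[OF l]
      by (simp add: sum_distrib_left power2_eq_square ac_simps)
    thus ?thesis using h01[of l] by simp
  qed
  have weights: "(cmod (P $$ (k,l)))\<^sup>2 = g l * c k l" if k: "k < N" and l: "l < K" for k l
  proof (cases "g l > 0")
    case True thus ?thesis unfolding c_def sc_def by (simp add: field_simps power2_eq_square)
  next
    case False
    hence "(\<Sum>k<N. (cmod (P $$ (k,l)))\<^sup>2) = 0"
      using g_eq[OF l] sum_nonneg[of "{..<N}" "\<lambda>k. (cmod (P $$ (k,l)))\<^sup>2"] by simp
    hence "(cmod (P $$ (k,l)))\<^sup>2 = 0" using k by (subst (asm) sum_nonneg_eq_0_iff) auto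
    thus ?thesis by (simp add: c_def)
  qed
  have "doubly_substochastic N K c"
    unfolding doubly_substochastic_def using rows cols by (simp add: c_def)
  moreover have "\<forall>k<N. (\<Sum>l<K. (cmod (P $$ (k,l)))\<^sup>2) = (\<Sum>l<K. g l * c k l)"
    using weights by (intro allI impI sum.cong refl) simp
  ultimately show ?thesis by blast
qed


section \<open>Existence of singular values\<close>

lemma ctrans_mult_spectral_nonneg:
  assumes A: "A \<in> carrier_mat n m"
  shows "\<exists>W t. unitary_mat m W \<and> ctrans A * A = W * real_diag_mat m t * ctrans W \<and> (\<forall>i<m. t i \<ge> 0)"
proof -
  define H where "H = ctrans A * A"
  have Hc: "H \<in> carrier_mat m m" unfolding H_def using A by auto
  obtain W t where W: "unitary_mat m W" and HW: "H = W * real_diag_mat m t * ctrans W"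
    using self_adjoint_spectral[OF Hc] A unfolding H_def by (auto simp: ctrans_mult)
  have "t i \<ge> 0" if i: "i < m" for i
  proof -
    have z: "col W i \<in> carrier_vec m" using unitary_matD(1)[OF W] i by auto
    have "H *\<^sub>v col W i = ctrans A *\<^sub>v (A *\<^sub>v col W i)"
      unfolding H_def by (rule assoc_mult_mat_vec[of _ m n _ m]) (use A z in auto)
    hence "braket (col W i) (H *\<^sub>v col W i) = braket (A *\<^sub>v col W i) (A *\<^sub>v col W i)"
      using braket_mult_vec[OF ctrans_carrier[OF A] z, of "A *\<^sub>v col W i"] A z by simp
    moreover have "braket (col W i) (H *\<^sub>v col W i) = complex_of_real (t i)"
      by (rule braket_unitary_diag_col[OF W HW i])
    ultimately show ?thesis using braket_self_nonneg by (metis Re_complex_of_real)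
  qed
  thus ?thesis using W HW unfolding H_def by blast
qed

text \<open>Compare the multiplicity of the root 0 on both sides of Sylvester's identity.\<close>
lemma order_zero_char_poly_ctrans_mult:
  assumes A: "A \<in> carrier_mat n m"
  shows "m \<le> n + order 0 (char_poly (ctrans A * A))"
proof -
  have nz: "char_poly B \<noteq> 0" if "B \<in> carrier_mat k k" for B k
    using degree_monic_char_poly[OF that] by (metis coeff_0 zero_neq_one)
  have X: "order 0 ([:0, 1:] ^ k :: complex poly) = k" for k
    using order_power_n_n[of "0::complex" k] by simp
  have "ctrans A * A \<in> carrier_mat m m" "A * ctrans A \<in> carrier_mat n n" using A by auto
  hence "order 0 ([:0,1:] ^ n * char_poly (ctrans A * A)) = n + order 0 (char_poly (ctrans A * A))"
    and "order 0 ([:0,1:] ^ m * char_poly (A * ctrans A)) \<ge> m"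
    by (subst order_mult; use nz in \<open>auto simp: X\<close>)+
  thus ?thesis unfolding char_poly_ctrans_mult_commute[OF A] by simp
qed

lemma prod_linear_factors_split_zeros:
  fixes ts :: "real list"
  assumes "\<forall>x\<in>set ts. x \<ge> 0"
  shows "(\<Prod>x\<leftarrow>ts. [:- complex_of_real x, 1:])
    = (\<Prod>x\<leftarrow>filter (\<lambda>x. 0 < x) ts. [:- complex_of_real x, 1:]) * [:0,1:] ^ length (filter (\<lambda>x. x = 0) ts)"
  using assms by (induction ts) (auto simp: ac_simps simp del: mult_pCons_left mult_pCons_right)

lemma prod_list_map_mset_eq:
  "mset xs = mset ys \<Longrightarrow> prod_list (map f xs) = prod_list (map f ys)"
  for f :: "'b \<Rightarrow> 'a :: comm_monoid_mult"
proof -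
  assume "mset xs = mset ys"
  hence "mset (map f xs) = mset (map f ys)" by simp
  thus ?thesis by (metis prod_mset_prod_list)
qed

theorem singular_values_exist:
  assumes A: "A \<in> carrier_mat n m"
  shows "\<exists>s. length s = min n m \<and> sorted (rev s) \<and> (\<forall>x\<in>set s. x \<ge> 0) \<and>
    char_poly (ctrans A * A) = (\<Prod>x\<leftarrow>s. [:- complex_of_real (x\<^sup>2), 1:]) * [:0,1:] ^ (m - length s)"
proof -
  obtain W t where W: "unitary_mat m W" and HW: "ctrans A * A = W * real_diag_mat m t * ctrans W"
    and tnn: "\<forall>i<m. t i \<ge> 0"
    using ctrans_mult_spectral_nonneg[OF A] by blast
  define ts where "ts = map t [0..<m]"
  define pos where "pos = filter (\<lambda>x. 0 < x) ts"
  define z where "z = length (filter (\<lambda>x. x = 0) ts)"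
  let ?P = "\<Prod>x\<leftarrow>pos. [:- complex_of_real x, 1:]"
  have tsnn: "\<forall>x\<in>set ts. x \<ge> 0" unfolding ts_def using tnn by auto
  have "filter (\<lambda>x. x = 0) ts = filter (\<lambda>x. \<not> 0 < x) ts"
    using tsnn by (intro filter_cong) auto
  hence pz: "length pos + z = m"
    using sum_length_filter_compl[of "\<lambda>x. 0 < x" ts] unfolding pos_def z_def ts_def by simp
  have cp: "char_poly (ctrans A * A) = ?P * [:0,1:] ^ z"
    using char_poly_unitary_diag[OF W HW] prod_linear_factors_split_zeros[OF tsnn]
    unfolding ts_def pos_def z_def by simp
  have "order 0 ?P = 0"
    using order_prod_linear_factors[of 0 "map complex_of_real pos"] unfolding pos_def
    by (auto simp: o_def count_eq_zero_iff)
  hence "order 0 (char_poly (ctrans A * A)) = z"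
    unfolding cp by (subst order_mult) (auto simp: order_power_n_n[of 0 z, simplified])
  hence p_le: "length pos \<le> min n m" using order_zero_char_poly_ctrans_mult[OF A] pz by simp
  define s where "s = sort_desc (map sqrt pos @ replicate (min n m - length pos) 0)"
  have ls: "length s = min n m" unfolding s_def using p_le by simp
  have "(\<Prod>x\<leftarrow>s. [:- complex_of_real (x\<^sup>2), 1:])
      = (\<Prod>x\<leftarrow>map sqrt pos @ replicate (min n m - length pos) 0. [:- complex_of_real (x\<^sup>2), 1:])"
    unfolding s_def by (rule prod_list_map_mset_eq) simp
  moreover have "(\<Prod>x\<leftarrow>map sqrt pos. [:- complex_of_real (x\<^sup>2), 1:]) = ?P"
    unfolding pos_def map_map o_def by (intro arg_cong[of _ _ prod_list] map_cong refl) auto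
  ultimately have PS: "(\<Prod>x\<leftarrow>s. [:- complex_of_real (x\<^sup>2), 1:]) = ?P * [:0,1:] ^ (min n m - length pos)"
    by (simp add: prod_list_replicate)
  have "min n m - length pos + (m - length s) = z" using pz p_le ls by auto
  hence "char_poly (ctrans A * A) = (\<Prod>x\<leftarrow>s. [:- complex_of_real (x\<^sup>2), 1:]) * [:0,1:] ^ (m - length s)"
    unfolding cp PS mult.assoc power_add[symmetric] by simp
  moreover have "sorted (rev s)" unfolding s_def sort_desc_def by simp
  moreover have "\<forall>x\<in>set s. x \<ge> 0" unfolding s_def pos_def by auto
  ultimately show ?thesis using ls by blast
qed

lemma singular_values:
  assumes "A \<in> carrier_mat n m"
  shows "length (singular_values A) = min n m"
    and "char_poly (ctrans A * A)
      = (\<Prod>x\<leftarrow>singular_values A. [:- complex_of_real (x\<^sup>2), 1:]) * [:0,1:] ^ (m - length (singular_values A))"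
  using someI_ex[OF singular_values_exist[OF assms]] assms unfolding singular_values_def by auto

lemma sum_braket_cols_unitary_diag:
  assumes U: "unitary_mat N U" and rho: "\<rho> = U * real_diag_mat N lam * ctrans U"
    and Z: "Z \<in> carrier_mat N K" and V: "unitary_mat K V"
  shows "(\<Sum>c<K. Re (braket (col Z c) (\<rho> *\<^sub>v col Z c)))
    = (\<Sum>k<N. lam k * (\<Sum>l<K. (cmod ((ctrans U * Z * V) $$ (k,l)))\<^sup>2))"
proof -
  have Uc: "U \<in> carrier_mat N N" and Vc: "V \<in> carrier_mat K K" and VV: "V * ctrans V = 1\<^sub>m K"
    using unitary_matD[OF U] unitary_matD[OF V] by auto
  define M where "M = ctrans U * Z"
  have Mc: "M \<in> carrier_mat N K" unfolding M_def using Uc Z by auto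
  have "Re (braket (col Z c) (\<rho> *\<^sub>v col Z c)) = (\<Sum>k<N. lam k * (cmod (M $$ (k,c)))\<^sup>2)"
    if c: "c < K" for c
  proof -
    have "ctrans U *\<^sub>v col Z c = col M c"
      unfolding M_def using col_mult2[OF ctrans_carrier[OF Uc] Z c] by simp
    hence "(ctrans U *\<^sub>v col Z c) $ k = M $$ (k,c)" if "k < N" for k
      using Mc c that by simp
    thus ?thesis using braket_unitary_diag[OF U rho, of "col Z c"] Z c by simp
  qed
  hence "(\<Sum>c<K. Re (braket (col Z c) (\<rho> *\<^sub>v col Z c))) = (\<Sum>k<N. lam k * (\<Sum>c<K. (cmod (M $$ (k,c)))\<^sup>2))"
    by (simp add: sum.swap[of _ "{..<K}"] sum_distrib_left)
  moreover have "(\<Sum>c<K. (cmod (M $$ (k,c)))\<^sup>2) = (\<Sum>l<K. (cmod ((M * V) $$ (k,l)))\<^sup>2)" if "k < N" for k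
  proof -
    have "(M * V) * ctrans (M * V) = M * (V * ctrans V) * ctrans M"
      using Mc Vc by (simp add: ctrans_mult assoc_mult_mat_dims)
    hence "(M * V) * ctrans (M * V) = M * ctrans M" using Mc unfolding VV by simp
    thus ?thesis using diag_mult_ctrans[OF Mc that] diag_mult_ctrans[of "M * V" N K k] Mc Vc that
      by (metis mult_carrier_mat of_real_eq_iff)
  qed
  ultimately show ?thesis unfolding M_def by simp
qed

text \<open>The matrix P = U^* Z V has P^* P = diag g, and the sum equals
  \<Sum>_kl lam_k g_l c_kl with doubly substochastic weights c.\<close>
theorem sum_braket_cols_le_dotp:
  assumes U: "unitary_mat N U" and rho: "\<rho> = U * real_diag_mat N lam * ctrans U"
    and lam: "\<forall>k<N. lam k \<ge> 0"
    and Z: "Z \<in> carrier_mat N K" and V: "unitary_mat K V"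
    and G: "ctrans Z * Z = V * real_diag_mat K g * ctrans V"
  shows "(\<Sum>c<K. Re (braket (col Z c) (\<rho> *\<^sub>v col Z c)))
    \<le> dotp (sort_desc (map lam [0..<N])) (sort_desc (map g [0..<K]))"
proof -
  have Uc: "U \<in> carrier_mat N N" and UU: "U * ctrans U = 1\<^sub>m N"
    and Vc: "V \<in> carrier_mat K K" and VV: "ctrans V * V = 1\<^sub>m K"
    using unitary_matD[OF U] unitary_matD[OF V] by auto
  define P where "P = ctrans U * Z * V"
  have Pc: "P \<in> carrier_mat N K" unfolding P_def using Uc Vc Z by auto
  have "ctrans P * P = ctrans V * (ctrans Z * (U * ctrans U) * Z) * V"
    unfolding P_def using Uc Vc Z by (simp add: ctrans_mult assoc_mult_mat_dims)
  also have "\<dots> = (ctrans V * V) * real_diag_mat K g * (ctrans V * V)"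
    unfolding UU using Z Vc by (simp add: G assoc_mult_mat_dims)
  finally have PP: "ctrans P * P = real_diag_mat K g" unfolding VV by simp
  obtain c where c: "doubly_substochastic N K c"
    and rows: "\<forall>k<N. (\<Sum>l<K. (cmod (P $$ (k,l)))\<^sup>2) = (\<Sum>l<K. g l * c k l)"
    using doubly_substochastic_of_gram_diag[OF Pc PP] by blast
  have g: "g l \<ge> 0" if "l < K" for l
    using real_diag_gram_eq_col_norm[OF Pc PP that] by (simp add: sum_nonneg)
  have "(\<Sum>c<K. Re (braket (col Z c) (\<rho> *\<^sub>v col Z c))) = (\<Sum>k<N. \<Sum>l<K. lam k * g l * c k l)"
    unfolding sum_braket_cols_unitary_diag[OF U rho Z V, folded P_def]
    using rows by (simp add: sum_distrib_left mult.assoc)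
  also have "\<dots> = (\<Sum>k<length (map lam [0..<N]). \<Sum>l<length (map g [0..<K]).
      map lam [0..<N] ! k * map g [0..<K] ! l * c k l)"
    by (intro sum.cong refl) auto
  also have "\<dots> \<le> dotp (sort_desc (map lam [0..<N])) (sort_desc (map g [0..<K]))"
    by (rule doubly_substochastic_rearrangement) (use lam g c in auto)
  finally show ?thesis .
qed

lemma density_mat_spectral:
  assumes "density_mat N \<rho>" and "eigenvalue_vector \<rho> lam"
  shows "\<exists>U d. unitary_mat N U \<and> \<rho> = U * real_diag_mat N d * ctrans U \<and>
    (\<forall>k<N. d k \<ge> 0) \<and> mset (map d [0..<N]) = mset lam"
proof -
  have rho: "\<rho> \<in> carrier_mat N N" "ctrans \<rho> = \<rho>"
    and psd: "\<And>v. v \<in> carrier_vec N \<Longrightarrow> Re (braket v (\<rho> *\<^sub>v v)) \<ge> 0"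
    using assms(1) self_adjoint_iff[of \<rho> N] unfolding density_mat_def by blast+
  obtain U d where U: "unitary_mat N U" and rhoU: "\<rho> = U * real_diag_mat N d * ctrans U"
    using self_adjoint_spectral[OF rho] by blast
  have "d k \<ge> 0" if "k < N" for k
    using braket_unitary_diag_col[OF U rhoU that] psd[of "col U k"] unitary_matD(1)[OF U] that by simp
  moreover have "mset (map d [0..<N]) = mset lam"
    using mset_eigenvalues_unitary_diag[OF U rhoU] assms(2) unfolding eigenvalue_vector_def by blast
  ultimately show ?thesis using U rhoU by blast
qed

lemma gram_mat_of_two_bases:
  assumes e: "orthonormal_basis N e" and a: "orthonormal_basis N a" and "m \<le> N" "n \<le> N"
  defines "Z \<equiv> mat_of_cols N (map e [0..<m] @ map a [0..<n])"
  shows "ctrans Z * Z = four_block_mat (1\<^sub>m m) (ctrans (mat n m (\<lambda>(i,j). braket (a i) (e j)))) 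
      (mat n m (\<lambda>(i,j). braket (a i) (e j))) (1\<^sub>m n)"
proof -
  let ?A = "mat n m (\<lambda>(i,j). braket (a i) (e j))"
  have ec: "i < N \<Longrightarrow> e i \<in> carrier_vec N" and ac: "i < N \<Longrightarrow> a i \<in> carrier_vec N" for i
    using e a unfolding orthonormal_basis_def by blast+
  have Zc: "Z \<in> carrier_mat N (m + n)" unfolding Z_def by auto
  have colZ: "col Z c = (if c < m then e c else a (c - m))" if "c < m + n" for c
    unfolding Z_def using that assms ec ac by (auto simp: nth_append)
  have "braket (col Z c) (col Z d) = four_block_mat (1\<^sub>m m) (ctrans ?A) ?A (1\<^sub>m n) $$ (c,d)"
    if "c < m + n" "d < m + n" for c d
  proof (cases "c < m"; cases "d < m")
    assume cd: "c < m" "\<not> d < m"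
    hence "e c \<in> carrier_vec N" "a (d - m) \<in> carrier_vec N" using ec ac that assms(3,4) by auto
    hence "braket (e c) (a (d - m)) = cnj (braket (a (d - m)) (e c))" by (intro braket_cnj) simp
    thus ?thesis using that cd colZ by auto
  qed (use that colZ e a assms(3,4) in \<open>auto simp: orthonormal_basis_def\<close>)
  thus ?thesis using gram_mat_index[OF Zc] Zc by (intro eq_matI) auto
qed

lemma sum_lessThan_add: "(\<Sum>i<m + n. f i) = (\<Sum>i<m. f i) + (\<Sum>i<n. f (m + i))" for m n :: nat
  by (induction n) (simp_all add: ac_simps)

theorem lemma1:
  fixes N m n :: nat and \<rho> :: "complex mat" and lam :: "real list"
    and e a :: "nat \<Rightarrow> complex vec"
  assumes "density_mat N \<rho>"
    and "length lam = N" and "eigenvalue_vector \<rho> lam"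
    and "orthonormal_basis N e" and "orthonormal_basis N a"
    and "1 \<le> m" and "m \<le> N" and "1 \<le> n" and "n \<le> N"
  shows "let p = (\<lambda>i. Re (braket (e i) (\<rho> *\<^sub>v e i)));
             q = (\<lambda>i. Re (braket (a i) (\<rho> *\<^sub>v a i)));
             A = mat n m (\<lambda>(i,j). braket (a i) (e j));
             s = singular_values A;
             \<mu> = map (\<lambda>x. 1 + x) (pad (m + n) (s @ map uminus s))
         in (\<Sum>j<m. p j) + (\<Sum>i<n. q i) \<le> dotp (sort_desc lam) (sort_desc \<mu>)"
proof -
  obtain U d where U: "unitary_mat N U" and rho: "\<rho> = U * real_diag_mat N d * ctrans U"
    and d: "\<forall>k<N. d k \<ge> 0" and d_lam: "mset (map d [0..<N]) = mset lam"
    using density_mat_spectral[OF assms(1,3)] by blast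
  define A where "A = mat n m (\<lambda>(i,j). braket (a i) (e j))"
  define \<mu> where "\<mu> = map (\<lambda>x. 1 + x) (pad (m + n) (singular_values A @ map uminus (singular_values A)))"
  define Z where "Z = mat_of_cols N (map e [0..<m] @ map a [0..<n])"
  have A: "A \<in> carrier_mat n m" and Z: "Z \<in> carrier_mat N (m + n)" unfolding A_def Z_def by auto
  have G: "ctrans Z * Z = four_block_mat (1\<^sub>m m) (ctrans A) A (1\<^sub>m n)"
    unfolding Z_def A_def using assms(4,5,7,9) by (rule gram_mat_of_two_bases)
  have "ctrans Z * Z \<in> carrier_mat (m + n) (m + n)" "ctrans (ctrans Z * Z) = ctrans Z * Z"
    using Z by (auto simp: ctrans_mult)
  then obtain V g where V: "unitary_mat (m + n) V"
    and GV: "ctrans Z * Z = V * real_diag_mat (m + n) g * ctrans V"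
    using self_adjoint_spectral by blast
  have "mset (map g [0..<m + n]) = mset \<mu>"
    using mset_eigenvalues_unitary_diag[OF V GV] char_poly_gram_block[OF A singular_values[OF A]]
    unfolding G \<mu>_def by blast
  hence "sort_desc (map g [0..<m + n]) = sort_desc \<mu>" by (rule sort_desc_mset_eq)
  hence "(\<Sum>c<m + n. Re (braket (col Z c) (\<rho> *\<^sub>v col Z c))) \<le> dotp (sort_desc lam) (sort_desc \<mu>)"
    using sum_braket_cols_le_dotp[OF U rho d Z V GV] unfolding sort_desc_mset_eq[OF d_lam] by simp
  moreover have "col Z j = e j" if "j < m" for j
    unfolding Z_def using that assms(4,7) by (auto simp: orthonormal_basis_def nth_append)
  moreover have "col Z (m + i) = a i" if "i < n" for i
    unfolding Z_def using that assms(5,9) by (auto simp: orthonormal_basis_def nth_append)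
  ultimately show ?thesis unfolding Let_def A_def[symmetric] \<mu>_def[symmetric] sum_lessThan_add by simp
qed

end
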